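(* Let $\Delta$ be an S-map and $\mu$ a real number. Suppose every maximal semisimple S-submap of $\Delta$ satisfies the condition $\mathcal X(\mu)$. Let $S$ be the number of selected external edges of $\Delta$. Then $$S\ge(1-2\mu)\sum_{\Pi\in\Delta(2)}|\partial\Pi|.$$
   Context: A map is a connected subcomplex of an oriented combinatorial 2-sphere together with a set of cycles (its contours) such that each oriented edge lies either in the boundary cycle $\partial\Pi$ of some face $\Pi$ or in a contour of the map (and each oriented edge of the complex is counted once in the union of face boundaries and contours). $\Delta(1)$ and $\Delta(2)$ denote the sets of edges and faces; $|\partial\Pi|$ is the length of the boundary cycle of $\Pi$; $\|X\|$ is cardinality. An edge is external if at least one of its orientations lies on a contour of the map. A selection on a map is a set of nontrivial reduced subpaths of boundary cycles of faces, closed under taking nontrivial subpaths; an S-map is a map with a selection. An external edge is selected if an orientation of it lying on the boundary of a face is a selected path. A map is semisimple if every edge is incident to a face. A semisimple S-map $\Delta$ satisfies $\mathcal X(\mu)$ if the number $S$ of its selected external edges satisfies $S\ge\|\Delta(1)\|-\mu\sum_{\Pi\in\Delta(2)}|\partial\Pi|$. The maximal semisimple S-submaps of $\Delta$ are the S-submaps given by the connected components of the complex obtained from $\Delta$ by deleting all edges not incident to any face (with the induced contours and selection). *)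

theory Defs
  imports Complex_Main "HOL-Library.Sublist"
begin

text \<open>Darts = oriented edges; srev = orientation reversal; snxt d = the dart
following d along the boundary cycle of the face on whose boundary d lies;
stail d = initial vertex of d.\<close>

record ('v, 'd) sphere =
  sdarts :: "'d set"
  srev   :: "'d \<Rightarrow> 'd"
  snxt   :: "'d \<Rightarrow> 'd"
  stail  :: "'d \<Rightarrow> 'v"

definition shead :: "('v,'d) sphere \<Rightarrow> 'd \<Rightarrow> 'v" where
  "shead S d = stail S (srev S d)"

definition srot :: "('v,'d) sphere \<Rightarrow> 'd \<Rightarrow> 'd" where
  "srot S d = snxt S (srev S d)"

definition dart_orbit :: "('d \<Rightarrow> 'd) \<Rightarrow> 'd \<Rightarrow> 'd set" where
  "dart_orbit f d = {(f ^^ n) d | n. True}"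

definition sphere_faces :: "('v,'d) sphere \<Rightarrow> 'd set set" where
  "sphere_faces S = {dart_orbit (snxt S) d | d. d \<in> sdarts S}"

definition sphere_edges :: "('v,'d) sphere \<Rightarrow> 'd set set" where
  "sphere_edges S = {{d, srev S d} | d. d \<in> sdarts S}"

definition sphere_verts :: "('v,'d) sphere \<Rightarrow> 'v set" where
  "sphere_verts S = stail S ` sdarts S"

definition skel :: "('v,'d) sphere \<Rightarrow> 'd set \<Rightarrow> ('v \<times> 'v) set" where
  "skel S D = {(stail S d, shead S d) | d. d \<in> D}"

definition comb_sphere :: "('v,'d) sphere \<Rightarrow> bool" where
  "comb_sphere S \<longleftrightarrow>
     finite (sdarts S) \<and> sdarts S \<noteq> {} \<and>
     (\<forall>d\<in>sdarts S. srev S d \<in> sdarts S \<and> srev S (srev S d) = d \<and> srev S d \<noteq> d) \<and>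
     bij_betw (snxt S) (sdarts S) (sdarts S) \<and>
     (\<forall>d\<in>sdarts S. stail S (snxt S d) = shead S d) \<and>
     (\<forall>d\<in>sdarts S. \<forall>d'\<in>sdarts S. stail S d = stail S d' \<longleftrightarrow> d' \<in> dart_orbit (srot S) d) \<and>
     (\<forall>v\<in>sphere_verts S. \<forall>w\<in>sphere_verts S. (v, w) \<in> (skel S (sdarts S))\<^sup>*) \<and>
     int (card (sphere_verts S)) - int (card (sphere_edges S)) + int (card (sphere_faces S)) = 2"

text \<open>The boundary cycle of
a face \<Pi> is its snxt-orbit, so the length of the boundary cycle is card \<Pi>.
msel is the selection (a set of paths, i.e. dart lists).\<close>

record ('v, 'd) smap =
  mverts    :: "'v set"
  mdarts    :: "'d set"
  mfaces    :: "'d set set"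
  mcontours :: "'d list list"
  msel      :: "'d list set"

definition closed_path :: "('v,'d) sphere \<Rightarrow> 'd set \<Rightarrow> 'd list \<Rightarrow> bool" where
  "closed_path S D c \<longleftrightarrow> set c \<subseteq> D \<and>
     (\<forall>i<length c. shead S (c ! i) = stail S (c ! ((i + 1) mod length c)))"

definition is_map :: "('v,'d) sphere \<Rightarrow> ('v,'d) smap \<Rightarrow> bool" where
  "is_map S M \<longleftrightarrow>
     comb_sphere S \<and>
     mdarts M \<subseteq> sdarts S \<and> (\<forall>d\<in>mdarts M. srev S d \<in> mdarts M) \<and>
     mverts M \<subseteq> sphere_verts S \<and> (\<forall>d\<in>mdarts M. stail S d \<in> mverts M) \<and>
     mfaces M \<subseteq> sphere_faces S \<and> (\<forall>\<Pi>\<in>mfaces M. \<Pi> \<subseteq> mdarts M) \<and>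
     mverts M \<noteq> {} \<and>
     (\<forall>v\<in>mverts M. \<forall>w\<in>mverts M. (v, w) \<in> (skel S (mdarts M))\<^sup>*) \<and>
     (\<forall>c\<in>set (mcontours M). closed_path S (mdarts M) c) \<and>
     (\<forall>d\<in>mdarts M. (if d \<in> \<Union>(mfaces M) then 1 else 0)
                     + (\<Sum>c\<leftarrow>mcontours M. count_list c d) = (1::nat))"

definition face_path :: "('v,'d) sphere \<Rightarrow> 'd \<Rightarrow> nat \<Rightarrow> 'd list" where
  "face_path S d m = map (\<lambda>i. (snxt S ^^ i) d) [0..<m]"

definition subpath_of_bd :: "('v,'d) sphere \<Rightarrow> 'd set \<Rightarrow> 'd list \<Rightarrow> bool" where
  "subpath_of_bd S \<Pi> p \<longleftrightarrow> (\<exists>d\<in>\<Pi>. \<exists>m. 1 \<le> m \<and> m \<le> card \<Pi> \<and> p = face_path S d m)"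

definition reduced_path :: "('v,'d) sphere \<Rightarrow> 'd list \<Rightarrow> bool" where
  "reduced_path S p \<longleftrightarrow> (\<forall>i. Suc i < length p \<longrightarrow> p ! Suc i \<noteq> srev S (p ! i))"

definition is_selection :: "('v,'d) sphere \<Rightarrow> ('v,'d) smap \<Rightarrow> bool" where
  "is_selection S M \<longleftrightarrow>
     (\<forall>p\<in>msel M. (\<exists>\<Pi>\<in>mfaces M. subpath_of_bd S \<Pi> p) \<and> reduced_path S p) \<and>
     (\<forall>p\<in>msel M. \<forall>q. q \<noteq> [] \<and> sublist q p \<longrightarrow> q \<in> msel M)"

definition is_smap :: "('v,'d) sphere \<Rightarrow> ('v,'d) smap \<Rightarrow> bool" where
  "is_smap S M \<longleftrightarrow> is_map S M \<and> is_selection S M"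

definition map_edges :: "('v,'d) sphere \<Rightarrow> ('v,'d) smap \<Rightarrow> 'd set set" where
  "map_edges S M = {{d, srev S d} | d. d \<in> mdarts M}"

definition external_edge :: "('v,'d) sphere \<Rightarrow> ('v,'d) smap \<Rightarrow> 'd set \<Rightarrow> bool" where
  "external_edge S M e \<longleftrightarrow> (\<exists>d\<in>e. \<exists>c\<in>set (mcontours M). d \<in> set c)"

definition sel_ext_edges :: "('v,'d) sphere \<Rightarrow> ('v,'d) smap \<Rightarrow> 'd set set" where
  "sel_ext_edges S M = {e \<in> map_edges S M. external_edge S M e \<and>
       (\<exists>d\<in>e. d \<in> \<Union>(mfaces M) \<and> [d] \<in> msel M)}"

definition semisimple :: "('v,'d) sphere \<Rightarrow> ('v,'d) smap \<Rightarrow> bool" where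
  "semisimple S M \<longleftrightarrow> (\<forall>d\<in>mdarts M. d \<in> \<Union>(mfaces M) \<or> srev S d \<in> \<Union>(mfaces M))"

definition satisfies_X :: "real \<Rightarrow> ('v,'d) sphere \<Rightarrow> ('v,'d) smap \<Rightarrow> bool" where
  "satisfies_X \<mu> S M \<longleftrightarrow> semisimple S M \<and>
     real (card (sel_ext_edges S M)) \<ge>
       real (card (map_edges S M)) - \<mu> * (\<Sum>\<Pi>\<in>mfaces M. real (card \<Pi>))"

definition ss_darts :: "('v,'d) sphere \<Rightarrow> ('v,'d) smap \<Rightarrow> 'd set" where
  "ss_darts S M = {d \<in> mdarts M. d \<in> \<Union>(mfaces M) \<or> srev S d \<in> \<Union>(mfaces M)}"

definition ss_components :: "('v,'d) sphere \<Rightarrow> ('v,'d) smap \<Rightarrow> 'v set set" where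
  "ss_components S M =
     {{w \<in> mverts M. (v, w) \<in> (skel S (ss_darts S M))\<^sup>*} | v. v \<in> mverts M}"

definition comp_submap :: "('v,'d) sphere \<Rightarrow> ('v,'d) smap \<Rightarrow> 'v set \<Rightarrow> ('v,'d) smap \<Rightarrow> bool" where
  "comp_submap S M C N \<longleftrightarrow>
     mverts N = C \<and>
     mdarts N = {d \<in> ss_darts S M. stail S d \<in> C} \<and>
     mfaces N = {\<Pi> \<in> mfaces M. \<Pi> \<subseteq> mdarts N} \<and>
     msel N = {p \<in> msel M. \<exists>\<Pi>\<in>mfaces N. subpath_of_bd S \<Pi> p} \<and>
     is_smap S N"

end

theory Submission
  imports Defs
begin

text \<open>
  Inside one map, each selected external edge contains a dart lying on a contour and therefore
  on no face, and distinct edges are disjoint; hence S + \<Sum>|\<partial>\<Pi>| is at most the number of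
  darts, which is at most 2\<parallel>\<Delta>(1)\<parallel>. Adding this to twice the inequality
  S \<ge> \<parallel>\<Delta>(1)\<parallel> - \<mu>\<Sum>|\<partial>\<Pi>| of \<X>(\<mu>) gives S \<ge> (1 - 2\<mu>)\<Sum>|\<partial>\<Pi>| for every maximal
  semisimple submap. The boundary of a face is a closed walk along edges incident to that face,
  so each face of \<Delta> lies in exactly one such submap; and a contour dart of a submap lies on
  no face of \<Delta>, so the selected external edges of the submaps are distinct selected external
  edges of \<Delta>. Summing over the submaps proves the theorem.
\<close>

section \<open>Orbits of a bijection of a finite set\<close>

lemma bij_betw_funpow_periodic:
  assumes f: "bij_betw f D D" and "finite D" and d: "d \<in> D"
  obtains k where "k > 0" and "(f ^^ k) d = d"
proof -
  have "range (\<lambda>n. (f ^^ n) d) \<subseteq> D"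
    using bij_betw_apply[OF bij_betw_funpow[OF f] d] by blast
  then have "\<not> inj (\<lambda>n::nat. (f ^^ n) d)"
    using \<open>finite D\<close> finite_imageD finite_subset infinite_UNIV_nat by blast
  then obtain i j where "i < j" and ij: "(f ^^ i) d = (f ^^ j) d"
    unfolding inj_def by (metis linorder_neqE_nat)
  have "(f ^^ i) ((f ^^ (j - i)) d) = (f ^^ i) d"
    using ij \<open>i < j\<close> by (metis funpow_add comp_apply le_add_diff_inverse less_imp_le)
  moreover have "(f ^^ (j - i)) d \<in> D"
    using bij_betw_apply[OF bij_betw_funpow[OF f] d] .
  ultimately have "(f ^^ (j - i)) d = d"
    using bij_betw_imp_inj_on[OF bij_betw_funpow[OF f]] d by (meson inj_onD)
  with \<open>i < j\<close> show thesis by (intro that[of "j - i"]) simp_all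
qed

lemma dart_orbit_self: "d \<in> dart_orbit f d"
  unfolding dart_orbit_def by (metis (mono_tags) funpow_0 mem_Collect_eq)

lemma dart_orbit_trans:
  assumes "x \<in> dart_orbit f d"
  shows "dart_orbit f x \<subseteq> dart_orbit f d"
  using assms unfolding dart_orbit_def by (auto simp flip: comp_apply[of "f ^^ _"] funpow_add)

lemma dart_orbit_eq:
  assumes "bij_betw f D D" and "finite D" and "d \<in> D" and x: "x \<in> dart_orbit f d"
  shows "dart_orbit f x = dart_orbit f d"
proof
  show "dart_orbit f x \<subseteq> dart_orbit f d" using x by (rule dart_orbit_trans)
  obtain k where "k > 0" and k: "(f ^^ k) d = d"
    using bij_betw_funpow_periodic assms(1-3) .
  obtain n where n: "x = (f ^^ n) d" using x unfolding dart_orbit_def by blast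
  have "(f ^^ (k * n)) d = d"
    using k by (induction n) (simp_all add: funpow_add)
  moreover have "k * n = (k - 1) * n + n" using \<open>k > 0\<close> by (cases k) simp_all
  ultimately have "(f ^^ ((k - 1) * n)) x = d" unfolding n by (simp add: funpow_add)
  then have "d \<in> dart_orbit f x" unfolding dart_orbit_def by blast
  then show "dart_orbit f d \<subseteq> dart_orbit f x" by (rule dart_orbit_trans)
qed

section \<open>Faces of a combinatorial sphere\<close>

lemma comb_sphere_srev_srev:
  assumes "comb_sphere S" and "d \<in> sdarts S"
  shows "srev S (srev S d) = d"
  using assms unfolding comb_sphere_def by blast

lemma sphere_face_eq_dart_orbit:
  assumes S: "comb_sphere S" and "P \<in> sphere_faces S" and "d \<in> P"
  shows "P = dart_orbit (snxt S) d"
proof -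
  obtain a where a: "a \<in> sdarts S" and P: "P = dart_orbit (snxt S) a"
    using assms(2) unfolding sphere_faces_def by blast
  have "bij_betw (snxt S) (sdarts S) (sdarts S)" and "finite (sdarts S)"
    using S unfolding comb_sphere_def by blast+
  from dart_orbit_eq[OF this a] \<open>d \<in> P\<close> show ?thesis unfolding P by simp
qed

lemma sphere_faces_nonempty: "P \<in> sphere_faces S \<Longrightarrow> P \<noteq> {}"
  unfolding sphere_faces_def using dart_orbit_self by fastforce

lemma sphere_faces_disjoint: "comb_sphere S \<Longrightarrow> pairwise disjnt (sphere_faces S)"
  unfolding pairwise_def disjnt_def by (metis disjoint_iff sphere_face_eq_dart_orbit)

lemma skel_rtrancl_along_face:
  assumes S: "comb_sphere S" and d: "d \<in> sdarts S"
    and D: "dart_orbit (snxt S) d \<subseteq> D" and x: "x \<in> dart_orbit (snxt S) d"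
  shows "(stail S d, stail S x) \<in> (skel S D)\<^sup>*"
proof -
  obtain n where x: "x = (snxt S ^^ n) d" using x unfolding dart_orbit_def by blast
  have "(stail S d, stail S ((snxt S ^^ n) d)) \<in> (skel S D)\<^sup>*" for n
  proof (induction n)
    case (Suc n)
    define y where "y = (snxt S ^^ n) d"
    have "y \<in> D" using D unfolding y_def dart_orbit_def by blast
    then have "(stail S y, shead S y) \<in> skel S D" unfolding skel_def by blast
    moreover have "y \<in> sdarts S"
      using S d unfolding y_def comb_sphere_def by (metis bij_betw_apply bij_betw_funpow)
    then have "stail S (snxt S y) = shead S y" using S unfolding comb_sphere_def by blast
    ultimately show ?case using Suc.IH unfolding y_def by simp
  qed simp
  then show ?thesis unfolding x .
qed

section \<open>Darts, edges and faces of a map\<close>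

lemma is_mapD:
  assumes "is_map S M"
  shows "comb_sphere S" and "mdarts M \<subseteq> sdarts S"
    and "\<And>d. d \<in> mdarts M \<Longrightarrow> srev S d \<in> mdarts M"
    and "mverts M \<subseteq> sphere_verts S"
    and "\<And>d. d \<in> mdarts M \<Longrightarrow> stail S d \<in> mverts M"
    and "mfaces M \<subseteq> sphere_faces S" and "\<Union>(mfaces M) \<subseteq> mdarts M"
    and "\<And>d. d \<in> mdarts M \<Longrightarrow>
      (if d \<in> \<Union>(mfaces M) then 1 else 0) + (\<Sum>c\<leftarrow>mcontours M. count_list c d) = (1::nat)"
  using assms unfolding is_map_def by simp_all blast+

lemma finite_mdarts: "is_map S M \<Longrightarrow> finite (mdarts M)"
  using is_mapD(1,2) unfolding comb_sphere_def by (meson finite_subset)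

lemma finite_mverts: "is_map S M \<Longrightarrow> finite (mverts M)"
  using is_mapD(1,4) unfolding comb_sphere_def sphere_verts_def by (meson finite_imageI finite_subset)

lemma finite_mfaces: "is_map S M \<Longrightarrow> finite (mfaces M)"
  using finite_mdarts is_mapD(7) by (meson finite_UnionD finite_subset)

lemma finite_map_edges: "is_map S M \<Longrightarrow> finite (map_edges S M)"
  unfolding map_edges_def Setcompr_eq_image by (simp add: finite_mdarts)

lemma finite_sel_ext_edges: "is_map S M \<Longrightarrow> finite (sel_ext_edges S M)"
  unfolding sel_ext_edges_def by (simp add: finite_map_edges)

lemma map_dart_on_contour_iff:
  assumes "is_map S M" and "d \<in> mdarts M"
  shows "(\<exists>c\<in>set (mcontours M). d \<in> set c) \<longleftrightarrow> d \<notin> \<Union>(mfaces M)"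
proof -
  define k where "k = (\<Sum>c\<leftarrow>mcontours M. count_list c d)"
  have "k = 0 \<longleftrightarrow> \<not> (\<exists>c\<in>set (mcontours M). d \<in> set c)"
    unfolding k_def by (simp add: count_list_0_iff)
  moreover have "(if d \<in> \<Union>(mfaces M) then 1 else 0) + k = 1"
    unfolding k_def using is_mapD(8)[OF assms] .
  ultimately show ?thesis by (auto split: if_splits)
qed

lemma map_edges_subset: "is_map S M \<Longrightarrow> e \<in> map_edges S M \<Longrightarrow> e \<subseteq> mdarts M"
  unfolding map_edges_def using is_mapD(3) by auto

lemma Union_map_edges: "is_map S M \<Longrightarrow> \<Union>(map_edges S M) = mdarts M"
  unfolding map_edges_def using is_mapD(3) by auto

lemma map_edges_nonempty: "e \<in> map_edges S M \<Longrightarrow> e \<noteq> {}"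
  unfolding map_edges_def by auto

lemma map_srev_srev: "is_map S M \<Longrightarrow> d \<in> mdarts M \<Longrightarrow> srev S (srev S d) = d"
  using comb_sphere_srev_srev is_mapD(1,2) by (metis subsetD)

lemma edge_eq_edge_of_mem:
  assumes "srev S (srev S a) = a" and "x \<in> {a, srev S a}"
  shows "{a, srev S a} = {x, srev S x}"
  using assms by auto

lemma map_edges_disjoint:
  assumes M: "is_map S M"
  shows "pairwise disjnt (map_edges S M)"
proof (rule pairwiseI)
  fix e e' assume "e \<in> map_edges S M" "e' \<in> map_edges S M" "e \<noteq> e'"
  then obtain a b where e: "e = {a, srev S a}" "a \<in> mdarts M"
    and e': "e' = {b, srev S b}" "b \<in> mdarts M"
    unfolding map_edges_def by blast
  have "srev S (srev S a) = a" "srev S (srev S b) = b"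
    using map_srev_srev[OF M] e(2) e'(2) by simp_all
  then have "e = e'" if "x \<in> e" "x \<in> e'" for x
    using that edge_eq_edge_of_mem unfolding e e' by metis
  with \<open>e \<noteq> e'\<close> show "disjnt e e'" unfolding disjnt_def by blast
qed

lemma external_edge_iff:
  assumes M: "is_map S M" and e: "e \<in> map_edges S M"
  shows "external_edge S M e \<longleftrightarrow> (\<exists>d\<in>e. d \<notin> \<Union>(mfaces M))"
proof -
  have "\<forall>d\<in>e. (\<exists>c\<in>set (mcontours M). d \<in> set c) \<longleftrightarrow> d \<notin> \<Union>(mfaces M)"
    using map_dart_on_contour_iff[OF M] map_edges_subset[OF M e] by (meson subsetD)
  then show ?thesis unfolding external_edge_def by (meson bex_cong)
qed

lemma card_le_card_if_disjoint_meeting: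
  assumes "finite K" and "pairwise disjnt F" and meets: "\<And>A. A \<in> F \<Longrightarrow> A \<inter> K \<noteq> {}"
  shows "card F \<le> card K"
proof (cases "finite F")
  case True
  have "card F = (\<Sum>A\<in>F. 1)" by simp
  also have "\<dots> \<le> (\<Sum>A\<in>F. card (A \<inter> K))"
    using \<open>finite K\<close> meets by (intro sum_mono) (simp add: Suc_leI card_gt_0_iff)
  also have "\<dots> = card (\<Union>A\<in>F. A \<inter> K)"
    using True \<open>finite K\<close> \<open>pairwise disjnt F\<close>
    by (intro card_UN_disjoint[symmetric]) (auto simp: pairwise_def disjnt_def)
  also have "\<dots> \<le> card K" using \<open>finite K\<close> by (intro card_mono) auto
  finally show ?thesis .
qed simp

lemma sum_card_mfaces:
  assumes "is_map S M"
  shows "(\<Sum>P\<in>mfaces M. card P) = card (\<Union>(mfaces M))"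
proof (rule card_Union_disjoint[symmetric])
  show "pairwise disjnt (mfaces M)"
    using sphere_faces_disjoint[OF is_mapD(1)[OF assms]] is_mapD(6)[OF assms]
    by (rule pairwise_subset)
  show "finite P" if "P \<in> mfaces M" for P
    using that finite_mdarts[OF assms] is_mapD(7)[OF assms] by (meson Union_upper finite_subset subset_trans)
qed

lemma card_mdarts_le:
  assumes "is_map S M"
  shows "card (mdarts M) \<le> 2 * card (map_edges S M)"
proof -
  have "card (mdarts M) \<le> (\<Sum>e\<in>map_edges S M. card e)"
    unfolding Union_map_edges[OF assms, symmetric] by (rule card_Union_le_sum_card)
  also have "\<dots> \<le> (\<Sum>e\<in>map_edges S M. 2)"
    by (intro sum_mono) (auto simp: map_edges_def card_insert_le_m1)
  finally show ?thesis by simp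
qed

lemma card_sel_ext_edges_le:
  assumes M: "is_map S M"
  shows "card (sel_ext_edges S M) \<le> card (mdarts M - \<Union>(mfaces M))"
proof (rule card_le_card_if_disjoint_meeting)
  show "finite (mdarts M - \<Union>(mfaces M))" using finite_mdarts[OF M] by simp
  show "pairwise disjnt (sel_ext_edges S M)"
    using map_edges_disjoint[OF M] by (rule pairwise_subset) (auto simp: sel_ext_edges_def)
  show "e \<inter> (mdarts M - \<Union>(mfaces M)) \<noteq> {}" if "e \<in> sel_ext_edges S M" for e
    using that external_edge_iff[OF M] map_edges_subset[OF M] unfolding sel_ext_edges_def by blast
qed

lemma card_sel_ext_edges_add_sum_card_faces_le:
  assumes M: "is_map S M"
  shows "card (sel_ext_edges S M) + (\<Sum>P\<in>mfaces M. card P) \<le> 2 * card (map_edges S M)"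
proof -
  have "card (mdarts M - \<Union>(mfaces M)) = card (mdarts M) - card (\<Union>(mfaces M))"
    using is_mapD(7)[OF M] finite_mdarts[OF M] by (meson card_Diff_subset finite_subset)
  moreover have "card (\<Union>(mfaces M)) \<le> card (mdarts M)"
    using is_mapD(7)[OF M] finite_mdarts[OF M] by (rule card_mono[rotated])
  ultimately show ?thesis
    using card_sel_ext_edges_le[OF M] sum_card_mfaces[OF M] card_mdarts_le[OF M] by linarith
qed

lemma sel_ext_edges_bound_if_satisfies_X:
  assumes M: "is_map S M" and X: "satisfies_X \<mu> S M"
  shows "(1 - 2 * \<mu>) * (\<Sum>P\<in>mfaces M. real (card P)) \<le> real (card (sel_ext_edges S M))"
proof -
  let ?s = "real (card (sel_ext_edges S M))" and ?E = "real (card (map_edges S M))"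
    and ?F = "\<Sum>P\<in>mfaces M. real (card P)"
  have "?s \<ge> ?E - \<mu> * ?F" using X unfolding satisfies_X_def by blast
  moreover have "?s + ?F \<le> 2 * ?E"
    using card_sel_ext_edges_add_sum_card_faces_le[OF M] by (simp flip: of_nat_sum of_nat_add)
  moreover have "(1 - 2 * \<mu>) * ?F = ?F - 2 * (\<mu> * ?F)" by (simp add: algebra_simps)
  ultimately show ?thesis by linarith
qed

section \<open>Maximal semisimple submaps\<close>

definition ss_connected :: "('v, 'd) sphere \<Rightarrow> ('v, 'd) smap \<Rightarrow> 'v rel" where
  "ss_connected S M = Restr ((skel S (ss_darts S M))\<^sup>*) (mverts M)"

lemma sym_skel_ss_darts:
  assumes M: "is_map S M"
  shows "sym (skel S (ss_darts S M))"
proof (rule symI)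
  fix v w assume "(v, w) \<in> skel S (ss_darts S M)"
  then obtain d where d: "d \<in> ss_darts S M" and v: "v = stail S d" and w: "w = shead S d"
    unfolding skel_def by blast
  have dM: "d \<in> mdarts M" using d unfolding ss_darts_def by blast
  then have "srev S d \<in> ss_darts S M"
    using d is_mapD(3)[OF M] map_srev_srev[OF M] unfolding ss_darts_def by auto
  moreover have "w = stail S (srev S d)" and "v = shead S (srev S d)"
    using v w map_srev_srev[OF M dM] unfolding shead_def by simp_all
  ultimately show "(w, v) \<in> skel S (ss_darts S M)" unfolding skel_def by blast
qed

lemma equiv_ss_connected:
  assumes "is_map S M"
  shows "equiv (mverts M) (ss_connected S M)"
proof (rule equivI)
  show "ss_connected S M \<subseteq> mverts M \<times> mverts M" unfolding ss_connected_def by blast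
  show "refl_on (mverts M) (ss_connected S M)" unfolding ss_connected_def refl_on_def by blast
  show "sym (ss_connected S M)"
    using sym_rtrancl[OF sym_skel_ss_darts[OF assms]] unfolding ss_connected_def sym_def by blast
  show "trans (ss_connected S M)" unfolding ss_connected_def trans_def by (blast intro: rtrancl_trans)
qed

lemma ss_components_eq_quotient: "ss_components S M = mverts M // ss_connected S M"
  unfolding ss_components_def quotient_def ss_connected_def by auto

lemma finite_ss_components: "is_map S M \<Longrightarrow> finite (ss_components S M)"
  unfolding ss_components_eq_quotient
  using finite_quotient finite_mverts equiv_type equiv_ss_connected by metis

lemma ss_component_closed:
  assumes M: "is_map S M" and C: "C \<in> ss_components S M" and v: "v \<in> C"
    and w: "w \<in> mverts M" and vw: "(v, w) \<in> (skel S (ss_darts S M))\<^sup>*"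
  shows "w \<in> C"
proof -
  obtain u where C: "C = ss_connected S M `` {u}"
    using C unfolding ss_components_eq_quotient by (rule quotientE)
  have "(u, v) \<in> ss_connected S M" using v C by blast
  moreover have "(v, w) \<in> ss_connected S M"
    using vw w \<open>(u, v) \<in> ss_connected S M\<close> unfolding ss_connected_def by blast
  ultimately show ?thesis
    using equiv_ss_connected[OF M] unfolding C equiv_def trans_def by blast
qed

lemma face_in_comp_submap:
  assumes M: "is_map S M" and C: "C \<in> ss_components S M" and N: "comp_submap S M C N"
    and P: "P \<in> mfaces M" and d: "d \<in> P" "stail S d \<in> C"
  shows "P \<in> mfaces N"
proof -
  have P_ss: "P \<subseteq> ss_darts S M" using P is_mapD(7)[OF M] unfolding ss_darts_def by auto
  have "d \<in> sdarts S" using d(1) P is_mapD(2,7)[OF M] by blast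
  moreover have P_orbit: "P = dart_orbit (snxt S) d"
    using is_mapD(6)[OF M] P d(1) by (intro sphere_face_eq_dart_orbit[OF is_mapD(1)[OF M]]) auto
  ultimately have "(stail S d, stail S x) \<in> (skel S (ss_darts S M))\<^sup>*" if "x \<in> P" for x
    using skel_rtrancl_along_face[OF is_mapD(1)[OF M]] P_ss that unfolding P_orbit by blast
  moreover have "stail S x \<in> mverts M" if "x \<in> P" for x
    using is_mapD(5,7)[OF M] P that by blast
  ultimately have "stail S x \<in> C" if "x \<in> P" for x
    using ss_component_closed[OF M C d(2)] that by blast
  with P P_ss N show ?thesis unfolding comp_submap_def by auto
qed

lemma pairwise_disjnt_if_nonempty_subsets:
  assumes A: "pairwise (\<lambda>i j. disjnt (A i) (A j)) I"
    and B: "\<And>i X. i \<in> I \<Longrightarrow> X \<in> B i \<Longrightarrow> X \<noteq> {} \<and> X \<subseteq> A i"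
  shows "pairwise (\<lambda>i j. disjnt (B i) (B j)) I"
proof (rule pairwiseI)
  fix i j assume "i \<in> I" "j \<in> I" "i \<noteq> j"
  with A have "A i \<inter> A j = {}" unfolding pairwise_def disjnt_def by blast
  with B[OF \<open>i \<in> I\<close>] B[OF \<open>j \<in> I\<close>] show "disjnt (B i) (B j)" unfolding disjnt_def by blast
qed

lemma pairwise_disjnt_mdarts_comp_submaps:
  assumes M: "is_map S M" and N: "\<forall>C\<in>ss_components S M. comp_submap S M C (N C)"
  shows "pairwise (\<lambda>C C'. disjnt (mdarts (N C)) (mdarts (N C'))) (ss_components S M)"
proof (rule pairwiseI)
  fix C C' assume C: "C \<in> ss_components S M" and C': "C' \<in> ss_components S M" and "C \<noteq> C'"
  then have "C \<inter> C' = {}"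
    using quotient_disj[OF equiv_ss_connected[OF M]] unfolding ss_components_eq_quotient by blast
  with N C C' show "disjnt (mdarts (N C)) (mdarts (N C'))"
    unfolding comp_submap_def disjnt_def by auto
qed

lemma mfaces_eq_UN_comp_submaps:
  assumes M: "is_map S M" and N: "\<forall>C\<in>ss_components S M. comp_submap S M C (N C)"
  shows "mfaces M = (\<Union>C\<in>ss_components S M. mfaces (N C))"
proof
  show "(\<Union>C\<in>ss_components S M. mfaces (N C)) \<subseteq> mfaces M"
    using N unfolding comp_submap_def by auto
  show "mfaces M \<subseteq> (\<Union>C\<in>ss_components S M. mfaces (N C))"
  proof
    fix P assume P: "P \<in> mfaces M"
    then obtain d where d: "d \<in> P" using sphere_faces_nonempty is_mapD(6)[OF M] by blast
    define C where "C = ss_connected S M `` {stail S d}"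
    have "stail S d \<in> mverts M" using d P is_mapD(5,7)[OF M] by blast
    then have "C \<in> ss_components S M" and "stail S d \<in> C"
      unfolding C_def ss_components_eq_quotient
      using equiv_class_self[OF equiv_ss_connected[OF M]] by (auto intro: quotientI)
    with face_in_comp_submap[OF M _ _ P d] N show "P \<in> (\<Union>C\<in>ss_components S M. mfaces (N C))"
      by blast
  qed
qed

lemma pairwise_disjnt_mfaces_comp_submaps:
  assumes M: "is_map S M" and N: "\<forall>C\<in>ss_components S M. comp_submap S M C (N C)"
  shows "pairwise (\<lambda>C C'. disjnt (mfaces (N C)) (mfaces (N C'))) (ss_components S M)"
proof (rule pairwise_disjnt_if_nonempty_subsets[OF pairwise_disjnt_mdarts_comp_submaps[OF M N]])
  fix C P assume "C \<in> ss_components S M" "P \<in> mfaces (N C)"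
  with N have "P \<in> mfaces M" and "P \<subseteq> mdarts (N C)" unfolding comp_submap_def by auto
  then show "P \<noteq> {} \<and> P \<subseteq> mdarts (N C)" using sphere_faces_nonempty is_mapD(6)[OF M] by blast
qed

lemma sum_mfaces_comp_submaps:
  assumes M: "is_map S M" and N: "\<forall>C\<in>ss_components S M. comp_submap S M C (N C)"
  shows "(\<Sum>P\<in>mfaces M. f P) = (\<Sum>C\<in>ss_components S M. \<Sum>P\<in>mfaces (N C). f P)"
proof -
  have "finite (mfaces (N C))" if "C \<in> ss_components S M" for C
    using N that finite_mfaces[OF M] unfolding comp_submap_def by simp
  with pairwise_disjnt_mfaces_comp_submaps[OF M N] show ?thesis
    unfolding mfaces_eq_UN_comp_submaps[OF M N] pairwise_def disjnt_def
    by (intro sum.UNION_disjoint finite_ss_components[OF M]) simp_all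
qed

lemma comp_submap_is_map: "comp_submap S M C N \<Longrightarrow> is_map S N"
  unfolding comp_submap_def is_smap_def by blast

lemma sel_ext_edges_comp_submap_subset:
  assumes M: "is_map S M" and C: "C \<in> ss_components S M" and N: "comp_submap S M C N"
  shows "sel_ext_edges S N \<subseteq> sel_ext_edges S M"
proof
  fix e assume e: "e \<in> sel_ext_edges S N"
  have NM: "is_map S N" using N by (rule comp_submap_is_map)
  have eN: "e \<in> map_edges S N" using e unfolding sel_ext_edges_def by blast
  moreover have "mdarts N \<subseteq> mdarts M" using N unfolding comp_submap_def ss_darts_def by auto
  ultimately have eM: "e \<in> map_edges S M" unfolding map_edges_def by blast
  obtain x where x: "x \<in> e" "x \<notin> \<Union>(mfaces N)"
    using e external_edge_iff[OF NM eN] unfolding sel_ext_edges_def by blast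
  have "stail S x \<in> C" using map_edges_subset[OF NM eN] x(1) N unfolding comp_submap_def by auto
  then have "x \<notin> \<Union>(mfaces M)" using face_in_comp_submap[OF M C N] x by blast
  then have "external_edge S M e" using external_edge_iff[OF M eM] x(1) by blast
  moreover have "mfaces N \<subseteq> mfaces M" and "msel N \<subseteq> msel M"
    using N unfolding comp_submap_def by auto
  ultimately show "e \<in> sel_ext_edges S M" using e eM unfolding sel_ext_edges_def by blast
qed

lemma pairwise_disjnt_sel_ext_edges_comp_submaps:
  assumes M: "is_map S M" and N: "\<forall>C\<in>ss_components S M. comp_submap S M C (N C)"
  shows "pairwise (\<lambda>C C'. disjnt (sel_ext_edges S (N C)) (sel_ext_edges S (N C'))) (ss_components S M)"
proof (rule pairwise_disjnt_if_nonempty_subsets[OF pairwise_disjnt_mdarts_comp_submaps[OF M N]])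
  fix C e assume "C \<in> ss_components S M" "e \<in> sel_ext_edges S (N C)"
  then show "e \<noteq> {} \<and> e \<subseteq> mdarts (N C)"
    using map_edges_nonempty map_edges_subset[OF comp_submap_is_map] N
    unfolding sel_ext_edges_def by blast
qed

theorem proposition4p1:
  fixes S :: "('v, 'd) sphere" and M :: "('v, 'd) smap" and \<mu> :: real
  assumes "is_smap S M"
    and "\<forall>C\<in>ss_components S M. \<exists>N. comp_submap S M C N \<and> satisfies_X \<mu> S N"
  shows "real (card (sel_ext_edges S M)) \<ge> (1 - 2 * \<mu>) * (\<Sum>\<Pi>\<in>mfaces M. real (card \<Pi>))"
proof -
  have M: "is_map S M" using assms(1) unfolding is_smap_def by blast
  let ?K = "ss_components S M"
  obtain N where N: "\<forall>C\<in>?K. comp_submap S M C (N C)"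
    and X: "\<And>C. C \<in> ?K \<Longrightarrow> satisfies_X \<mu> S (N C)"
    using bchoice[OF assms(2)] by auto
  have NM: "\<And>C. C \<in> ?K \<Longrightarrow> is_map S (N C)" using N comp_submap_is_map by blast
  have "(1 - 2 * \<mu>) * (\<Sum>P\<in>mfaces M. real (card P))
      = (\<Sum>C\<in>?K. (1 - 2 * \<mu>) * (\<Sum>P\<in>mfaces (N C). real (card P)))"
    by (simp add: sum_mfaces_comp_submaps[OF M N] sum_distrib_left)
  also have "\<dots> \<le> (\<Sum>C\<in>?K. real (card (sel_ext_edges S (N C))))"
    by (intro sum_mono sel_ext_edges_bound_if_satisfies_X NM X)
  also have "\<dots> = real (card (\<Union>C\<in>?K. sel_ext_edges S (N C)))"
    using pairwise_disjnt_sel_ext_edges_comp_submaps[OF M N] unfolding pairwise_def disjnt_def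
    by (subst card_UN_disjoint[OF finite_ss_components[OF M]]) (simp_all add: finite_sel_ext_edges[OF NM])
  also have "\<dots> \<le> real (card (sel_ext_edges S M))"
    using sel_ext_edges_comp_submap_subset[OF M] N finite_sel_ext_edges[OF M]
    by (intro of_nat_mono card_mono) auto
  finally show ?thesis .
qed

end
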